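(* Let $\mathcal{X}$ be a nonempty finite set and let $k$ be a strong kernel on $\mathcal{X}$. Then the image of $k$ has at most $2|\mathcal{X}|-1$ elements, i.e. $|\{k(x,y): x,y\in\mathcal{X}\}|\le 2|\mathcal{X}|-1$.
   Context: A strong kernel on a set $\mathcal{X}$ is a symmetric function $k:\mathcal{X}\times\mathcal{X}\to\mathbb{R}_{\ge 0}$ such that $k(x,y)\ge\min\{k(x,z),k(z,y)\}$ for all $x,y,z\in\mathcal{X}$. *)

theory Defs
  imports Complex_Main
begin

definition strong_kernel :: "'a set \<Rightarrow> ('a \<Rightarrow> 'a \<Rightarrow> real) \<Rightarrow> bool" where
  "strong_kernel X k \<longleftrightarrow>
     (\<forall>x\<in>X. \<forall>y\<in>X. k x y = k y x) \<and>
     (\<forall>x\<in>X. \<forall>y\<in>X. k x y \<ge> 0) \<and>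
     (\<forall>x\<in>X. \<forall>y\<in>X. \<forall>z\<in>X. k x y \<ge> min (k x z) (k z y))"

end

theory Submission
  imports Defs
begin

text \<open>The diagonal contributes at most card X values, so it suffices to show that the
  off-diagonal values number at most card X - 1. Let m be the least off-diagonal value,
  attained at k a b. The ultrametric inequality shows that the points y with k a y > m
  (together with a) form a block A such that k x y = m for every x in A and y outside A.
  Hence every off-diagonal value is m or an off-diagonal value of A or of its complement,
  and induction on card X gives (card A - 1) + (card (X - A) - 1) + 1 = card X - 1.\<close>

definition off_diagonal_values :: "'a set \<Rightarrow> ('a \<Rightarrow> 'a \<Rightarrow> real) \<Rightarrow> real set" where
  "off_diagonal_values X k = {k x y | x y. x \<in> X \<and> y \<in> X \<and> x \<noteq> y}"

lemma strong_kernel_subset: "strong_kernel X k \<Longrightarrow> Y \<subseteq> X \<Longrightarrow> strong_kernel Y k"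
  unfolding strong_kernel_def by blast

lemma finite_off_diagonal_values: "finite X \<Longrightarrow> finite (off_diagonal_values X k)"
proof -
  assume "finite X"
  have "off_diagonal_values X k \<subseteq> (\<lambda>(x, y). k x y) ` (X \<times> X)"
    unfolding off_diagonal_values_def by auto
  then show ?thesis using \<open>finite X\<close> by (meson finite_SigmaI finite_imageI finite_subset)
qed

lemma strong_kernel_le_if_le:
  assumes "strong_kernel X k" "a \<in> X" "x \<in> X" "y \<in> X" "m < k a x" "k a y \<le> m"
  shows "k x y \<le> m"
proof -
  have "min (k a x) (k x y) \<le> k a y"
    using assms(1-4) unfolding strong_kernel_def by blast
  then show ?thesis using assms(5,6) by linarith
qed

lemma off_diagonal_values_Un_subset:
  assumes sym: "\<And>x y. x \<in> A \<Longrightarrow> y \<in> B \<Longrightarrow> k y x = k x y"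
    and cross: "\<And>x y. x \<in> A \<Longrightarrow> y \<in> B \<Longrightarrow> k x y = m"
  shows "off_diagonal_values (A \<union> B) k \<subseteq> insert m (off_diagonal_values A k \<union> off_diagonal_values B k)"
proof
  fix v assume "v \<in> off_diagonal_values (A \<union> B) k"
  then obtain x y where xy: "x \<in> A \<union> B" "y \<in> A \<union> B" "x \<noteq> y" "v = k x y"
    unfolding off_diagonal_values_def by blast
  consider "x \<in> A" "y \<in> A" | "x \<in> B" "y \<in> B" | "x \<in> A" "y \<in> B" | "x \<in> B" "y \<in> A"
    using xy by blast
  then show "v \<in> insert m (off_diagonal_values A k \<union> off_diagonal_values B k)"
    by cases (use xy sym cross in \<open>auto simp: off_diagonal_values_def\<close>)
qed

lemma strong_kernel_split_at_min:
  assumes "finite X" "strong_kernel X k" "off_diagonal_values X k \<noteq> {}"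
  obtains A m where "A \<subseteq> X" "A \<noteq> {}" "X - A \<noteq> {}"
    and "\<And>x y. x \<in> A \<Longrightarrow> y \<in> X - A \<Longrightarrow> k x y = m"
proof -
  define m where "m = Min (off_diagonal_values X k)"
  have fin: "finite (off_diagonal_values X k)"
    using finite_off_diagonal_values assms(1) by blast
  have "m \<in> off_diagonal_values X k"
    unfolding m_def using assms(3) fin by simp
  then obtain a b where ab: "a \<in> X" "b \<in> X" "a \<noteq> b" "k a b = m"
    unfolding off_diagonal_values_def by blast
  have m_le: "m \<le> k x y" if "x \<in> X" "y \<in> X" "x \<noteq> y" for x y
    unfolding m_def using fin that by (intro Min_le) (auto simp: off_diagonal_values_def)
  define A where "A = {y \<in> X. y = a \<or> m < k a y}"
  have "k x y = m" if x: "x \<in> A" and y: "y \<in> X - A" for x y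
  proof -
    have y': "y \<in> X" "y \<noteq> a" "k a y \<le> m" using y unfolding A_def by auto
    have x': "x \<in> X" "x = a \<or> m < k a x" using x unfolding A_def by auto
    have "k x y \<le> m"
      using x' y' strong_kernel_le_if_le[OF assms(2) ab(1)] by blast
    moreover have "m \<le> k x y"
      using m_le x' y' x y by blast
    ultimately show ?thesis by simp
  qed
  moreover have "A \<subseteq> X" "a \<in> A" "b \<in> X - A"
    using ab by (auto simp: A_def)
  ultimately show thesis using that[of A m] by blast
qed

lemma card_off_diagonal_values_le:
  assumes "finite X" "strong_kernel X k"
  shows "card (off_diagonal_values X k) \<le> card X - 1"
  using assms
proof (induction "card X" arbitrary: X rule: less_induct)
  case less
  show ?case
  proof (cases "off_diagonal_values X k = {}")
    case False
    then obtain A m where A: "A \<subseteq> X" "A \<noteq> {}" "X - A \<noteq> {}"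
      and cross: "\<And>x y. x \<in> A \<Longrightarrow> y \<in> X - A \<Longrightarrow> k x y = m"
      using strong_kernel_split_at_min[OF less.prems False] by blast
    let ?B = "X - A"
    have fin: "finite A" "finite ?B" using A(1) less.prems(1) finite_subset by auto
    have card_X: "card X = card A + card ?B"
      using card_Diff_subset[OF fin(1) A(1)] card_mono[OF less.prems(1) A(1)] by linarith
    have pos: "card A \<ge> 1" "card ?B \<ge> 1"
      using A(2,3) fin by (simp_all add: Suc_le_eq card_gt_0_iff)
    have "card A < card X" "card ?B < card X" using card_X pos by linarith+
    then have IH_A: "card (off_diagonal_values A k) \<le> card A - 1"
      and IH_B: "card (off_diagonal_values ?B k) \<le> card ?B - 1"
      using less.hyps fin strong_kernel_subset[OF less.prems(2)] A(1) by blast+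
    have sym: "k y x = k x y" if "x \<in> A" "y \<in> ?B" for x y
      using less.prems(2) A(1) that unfolding strong_kernel_def by blast
    have "X = A \<union> ?B" using A(1) by blast
    then have "card (off_diagonal_values X k)
        \<le> card (insert m (off_diagonal_values A k \<union> off_diagonal_values ?B k))"
      using off_diagonal_values_Un_subset[of A ?B k m, OF sym cross]
      by (metis card_mono finite_Un finite_insert finite_off_diagonal_values fin)
    also have "\<dots> \<le> Suc (card (off_diagonal_values A k \<union> off_diagonal_values ?B k))"
      by (simp add: card_insert_if finite_off_diagonal_values fin)
    also have "\<dots> \<le> Suc (card (off_diagonal_values A k) + card (off_diagonal_values ?B k))"
      using card_Un_le by simp
    finally show ?thesis using IH_A IH_B pos card_X by linarith
  qed simp
qed

theorem mainTheorem4: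
  fixes X :: "'a set" and k :: "'a \<Rightarrow> 'a \<Rightarrow> real"
  assumes "finite X" and "X \<noteq> {}" and "strong_kernel X k"
  shows "card {k x y | x y. x \<in> X \<and> y \<in> X} \<le> 2 * card X - 1"
proof -
  have "{k x y | x y. x \<in> X \<and> y \<in> X} \<subseteq> (\<lambda>x. k x x) ` X \<union> off_diagonal_values X k"
    unfolding off_diagonal_values_def by auto
  then have "card {k x y | x y. x \<in> X \<and> y \<in> X} \<le> card ((\<lambda>x. k x x) ` X \<union> off_diagonal_values X k)"
    using assms(1) finite_off_diagonal_values by (intro card_mono) auto
  also have "\<dots> \<le> card ((\<lambda>x. k x x) ` X) + card (off_diagonal_values X k)"
    by (rule card_Un_le)
  also have "\<dots> \<le> card X + (card X - 1)"
    using card_image_le[OF assms(1)] card_off_diagonal_values_le[OF assms(1,3)] by (intro add_mono) auto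
  finally show ?thesis using assms(1,2) by (simp add: card_gt_0_iff)
qed

end
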